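(* Let $K_1,K_{-1}\subseteq[N]$ be disjoint, $x_{\pm1}=\mathbb{1}_{K_1}-\mathbb{1}_{K_{-1}}$, and $A\in\mathbb{R}^{m\times N}$. The following are equivalent: (i) $x_{\pm1}$ is the unique solution of $\min\|x\|_1$ subject to $Ax=Ax_{\pm1}$ and $x\in[-1,1]^N$; (ii) $\ker(A)\cap N_K\cap H_{K_1,K_{-1}}=\{0\}$, where $K=K_1\cup K_{-1}$.
   Context: $\mathbb{1}_S$ has entries $1$ on $S$ and $0$ elsewhere; $K^C=[N]\setminus K$; $w_S$ agrees with $w$ on $S$ and is zero elsewhere. $N_K=\{w\in\mathbb{R}^N:\|w_K\|_1\ge\|w_{K^C}\|_1\}$ and $H_{K_1,K_{-1}}=\{w\in\mathbb{R}^N: w_i\le 0\text{ for } i\in K_1,\ w_i\ge0\text{ for } i\in K_{-1}\}$. "Unique solution" means unique minimizer. *)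

theory Defs
  imports "HOL-Analysis.Analysis"
begin

definition l1norm :: "real ^ 'n \<Rightarrow> real" where
  "l1norm x = (\<Sum>i\<in>UNIV. \<bar>x $ i\<bar>)"

definition indicator_vec :: "'n set \<Rightarrow> real ^ 'n" where
  "indicator_vec S = (\<chi> i. if i \<in> S then 1 else 0)"

definition restrict_vec :: "'n set \<Rightarrow> real ^ 'n \<Rightarrow> real ^ 'n" where
  "restrict_vec S w = (\<chi> i. if i \<in> S then w $ i else 0)"

definition nullspace_prop_set :: "'n set \<Rightarrow> (real ^ 'n) set" where
  "nullspace_prop_set K = {w. l1norm (restrict_vec K w) \<ge> l1norm (restrict_vec (- K) w)}"

definition sign_set :: "'n set \<Rightarrow> 'n set \<Rightarrow> (real ^ 'n) set" where
  "sign_set K1 Km1 = {w. (\<forall>i\<in>K1. w $ i \<le> 0) \<and> (\<forall>i\<in>Km1. w $ i \<ge> 0)}"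

definition matrix_kernel :: "real ^ 'n ^ 'm \<Rightarrow> (real ^ 'n) set" where
  "matrix_kernel A = {w. A *v w = 0}"

definition unique_box_l1_solution :: "real ^ 'n ^ 'm \<Rightarrow> real ^ 'n \<Rightarrow> bool" where
  "unique_box_l1_solution A x0 \<longleftrightarrow>
     (let F = {x. A *v x = A *v x0 \<and> (\<forall>i. -1 \<le> x $ i \<and> x $ i \<le> 1)} in
      x0 \<in> F \<and> (\<forall>x\<in>F. x \<noteq> x0 \<longrightarrow> l1norm x0 < l1norm x))"

end

theory Submission
  imports Defs
begin

text \<open>Every feasible point is \<open>x\<^sub>\<plusminus>\<^sub>1 + w\<close> with \<open>w \<in> ker A\<close>, and the box constraint forces
  \<open>w \<in> H\<^sub>K\<^sub>1\<^sub>,\<^sub>K\<^sub>-\<^sub>1\<close>. The triangle inequality gives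
  \<open>\<parallel>x\<^sub>\<plusminus>\<^sub>1 + w\<parallel>\<^sub>1 \<ge> \<parallel>x\<^sub>\<plusminus>\<^sub>1\<parallel>\<^sub>1 - \<parallel>w\<^sub>K\<parallel>\<^sub>1 + \<parallel>w\<^sub>K\<^sub>C\<parallel>\<^sub>1\<close>, with equality when \<open>w\<close> has the
  right signs and entries of modulus at most 1. So a feasible competitor of no larger norm
  yields a nonzero \<open>w \<in> ker A \<inter> N\<^sub>K \<inter> H\<close>; conversely such a \<open>w\<close>, scaled down to have entries
  in \<open>[-1,1]\<close> (all three sets are cones), yields one.\<close>

lemma l1norm_nonneg: "0 \<le> l1norm x"
  unfolding l1norm_def by (simp add: sum_nonneg)

lemma abs_component_le_l1norm: "\<bar>x $ i\<bar> \<le> l1norm x"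
  unfolding l1norm_def by (rule member_le_sum) auto

lemma l1norm_scaleR: "l1norm (c *\<^sub>R x) = \<bar>c\<bar> * l1norm x"
  unfolding l1norm_def by (simp add: abs_mult sum_distrib_left)

lemma restrict_vec_scaleR: "restrict_vec S (c *\<^sub>R x) = c *\<^sub>R restrict_vec S x"
  unfolding restrict_vec_def by (simp add: vec_eq_iff)

lemma restrict_vec_zero: "restrict_vec S 0 = 0"
  unfolding restrict_vec_def by (simp add: vec_eq_iff)

lemma scaleR_in_nullspace_prop_set: "w \<in> nullspace_prop_set K \<Longrightarrow> c *\<^sub>R w \<in> nullspace_prop_set K"
  unfolding nullspace_prop_set_def by (simp add: restrict_vec_scaleR l1norm_scaleR mult_left_mono)

lemma scaleR_in_sign_set: "w \<in> sign_set K1 Km1 \<Longrightarrow> 0 \<le> c \<Longrightarrow> c *\<^sub>R w \<in> sign_set K1 Km1"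
  unfolding sign_set_def by (auto simp: mult_nonneg_nonpos)

lemma zero_in_cones: "0 \<in> matrix_kernel A \<inter> nullspace_prop_set K \<inter> sign_set K1 Km1"
  by (simp add: matrix_kernel_def nullspace_prop_set_def sign_set_def restrict_vec_zero)

lemma sum_if_one_minus_abs_eq_l1norm_restrict:
  "(\<Sum>i\<in>UNIV. if i \<in> K then 1 - \<bar>w $ i\<bar> else \<bar>w $ i\<bar>) =
     real (card K) - l1norm (restrict_vec K w) + l1norm (restrict_vec (- K) w)"
proof -
  have "(\<Sum>i\<in>UNIV. if i \<in> K then 1 - \<bar>w $ i\<bar> else \<bar>w $ i\<bar>) =
        (\<Sum>i\<in>UNIV. (if i \<in> K then 1 else 0) - (if i \<in> K then \<bar>w $ i\<bar> else 0)
                     + (if i \<in> - K then \<bar>w $ i\<bar> else 0))"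
    by (intro sum.cong) auto
  also have "\<dots> = real (card K) - l1norm (restrict_vec K w) + l1norm (restrict_vec (- K) w)"
    unfolding l1norm_def restrict_vec_def
    by (simp add: sum.distrib sum_subtractf sum.If_cases if_distrib[of abs] cong: if_cong)
  finally show ?thesis .
qed

lemma l1norm_sign_vec_add_ge:
  assumes "K1 \<inter> Km1 = {}"
  shows "real (card (K1 \<union> Km1)) - l1norm (restrict_vec (K1 \<union> Km1) w)
           + l1norm (restrict_vec (- (K1 \<union> Km1)) w)
         \<le> l1norm (indicator_vec K1 - indicator_vec Km1 + w)"
  unfolding sum_if_one_minus_abs_eq_l1norm_restrict[symmetric] l1norm_def[of "_ + w"]
proof (rule sum_mono)
  fix i
  show "(if i \<in> K1 \<union> Km1 then 1 - \<bar>w $ i\<bar> else \<bar>w $ i\<bar>)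
          \<le> \<bar>(indicator_vec K1 - indicator_vec Km1 + w) $ i\<bar>"
    using assms by (auto simp: indicator_vec_def abs_if)
qed

lemma l1norm_sign_vec_add_eq:
  assumes "K1 \<inter> Km1 = {}" and "w \<in> sign_set K1 Km1" and "\<And>i. \<bar>w $ i\<bar> \<le> 1"
  shows "l1norm (indicator_vec K1 - indicator_vec Km1 + w) =
           real (card (K1 \<union> Km1)) - l1norm (restrict_vec (K1 \<union> Km1) w)
           + l1norm (restrict_vec (- (K1 \<union> Km1)) w)"
  unfolding sum_if_one_minus_abs_eq_l1norm_restrict[symmetric] l1norm_def[of "_ + w"]
proof (rule sum.cong)
  fix i
  show "\<bar>(indicator_vec K1 - indicator_vec Km1 + w) $ i\<bar> =
          (if i \<in> K1 \<union> Km1 then 1 - \<bar>w $ i\<bar> else \<bar>w $ i\<bar>)"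
    using assms(1,2) assms(3)[of i] by (auto simp: indicator_vec_def sign_set_def abs_if)
qed simp

lemma l1norm_sign_vec:
  assumes "K1 \<inter> Km1 = {}"
  shows "l1norm (indicator_vec K1 - indicator_vec Km1) = real (card (K1 \<union> Km1))"
proof -
  have "0 \<in> sign_set K1 Km1" and "l1norm (0 :: real ^ 'n) = 0"
    by (simp_all add: sign_set_def l1norm_def)
  then show ?thesis
    using l1norm_sign_vec_add_eq[OF assms, of 0] by (simp add: restrict_vec_zero)
qed

lemma sign_vec_add_in_box_imp_sign_set:
  assumes "K1 \<inter> Km1 = {}" and "\<forall>i. -1 \<le> (indicator_vec K1 - indicator_vec Km1 + w) $ i
                                    \<and> (indicator_vec K1 - indicator_vec Km1 + w) $ i \<le> 1"
  shows "w \<in> sign_set K1 Km1"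
proof -
  have box: "-1 \<le> (indicator_vec K1 - indicator_vec Km1) $ i + w $ i
               \<and> (indicator_vec K1 - indicator_vec Km1) $ i + w $ i \<le> 1" for i
    using assms(2) by simp
  show ?thesis
    unfolding sign_set_def
  proof (intro CollectI conjI ballI)
    fix i assume "i \<in> K1"
    moreover from this have "i \<notin> Km1" using assms(1) by blast
    ultimately show "w $ i \<le> 0"
      using box[of i] by (simp add: indicator_vec_def)
  next
    fix i assume "i \<in> Km1"
    moreover from this have "i \<notin> K1" using assms(1) by blast
    ultimately show "0 \<le> w $ i"
      using box[of i] by (simp add: indicator_vec_def)
  qed
qed

lemma sign_vec_add_in_box:
  assumes "K1 \<inter> Km1 = {}" and "w \<in> sign_set K1 Km1" and "\<And>i. \<bar>w $ i\<bar> \<le> 1"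
  shows "-1 \<le> (indicator_vec K1 - indicator_vec Km1 + w) $ i
           \<and> (indicator_vec K1 - indicator_vec Km1 + w) $ i \<le> 1"
  using assms(1,2) assms(3)[of i] by (auto simp: indicator_vec_def sign_set_def abs_le_iff)

lemma competitor_of_cone_vector:
  fixes A :: "real ^ 'n ^ 'm" and K1 Km1 :: "'n set"
  defines "x0 \<equiv> indicator_vec K1 - indicator_vec Km1"
  assumes disj: "K1 \<inter> Km1 = {}"
    and w: "w \<in> matrix_kernel A \<inter> nullspace_prop_set (K1 \<union> Km1) \<inter> sign_set K1 Km1"
    and "w \<noteq> 0"
  obtains x where "A *v x = A *v x0" and "\<forall>i. -1 \<le> x $ i \<and> x $ i \<le> 1"
    and "x \<noteq> x0" and "l1norm x \<le> l1norm x0"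
proof
  define t where "t = 1 / (1 + l1norm w)"
  have t: "0 < t" "t * (1 + l1norm w) = 1"
    using l1norm_nonneg[of w] by (auto simp: t_def)
  define v where "v = t *\<^sub>R w"
  have v_small: "\<bar>v $ i\<bar> \<le> 1" for i
  proof -
    have "\<bar>v $ i\<bar> = t * \<bar>w $ i\<bar>"
      using t by (simp add: v_def abs_mult)
    also have "\<dots> \<le> t * (1 + l1norm w)"
      using t(1) abs_component_le_l1norm[of w i] by (intro mult_left_mono) auto
    finally show ?thesis using t(2) by simp
  qed
  have v_N: "v \<in> nullspace_prop_set (K1 \<union> Km1)"
    using w by (simp add: v_def scaleR_in_nullspace_prop_set)
  have v_H: "v \<in> sign_set K1 Km1"
    using w t(1) by (simp add: v_def scaleR_in_sign_set)
  have "A *v v = 0"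
    using w by (simp add: v_def matrix_kernel_def matrix_vector_mult_scaleR)
  then show "A *v (x0 + v) = A *v x0"
    by (simp add: matrix_vector_right_distrib)
  show "\<forall>i. -1 \<le> (x0 + v) $ i \<and> (x0 + v) $ i \<le> 1"
    using sign_vec_add_in_box[OF disj v_H v_small] by (simp add: x0_def)
  show "x0 + v \<noteq> x0"
    using \<open>w \<noteq> 0\<close> t by (simp add: v_def)
  show "l1norm (x0 + v) \<le> l1norm x0"
    using l1norm_sign_vec_add_eq[OF disj v_H v_small] l1norm_sign_vec[OF disj] v_N
    by (simp add: x0_def nullspace_prop_set_def)
qed

lemma cone_vector_of_competitor:
  fixes A :: "real ^ 'n ^ 'm" and K1 Km1 :: "'n set"
  defines "x0 \<equiv> indicator_vec K1 - indicator_vec Km1"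
  assumes disj: "K1 \<inter> Km1 = {}"
    and "A *v x = A *v x0" and box: "\<forall>i. -1 \<le> x $ i \<and> x $ i \<le> 1"
    and "x \<noteq> x0" and le: "l1norm x \<le> l1norm x0"
  shows "x - x0 \<in> matrix_kernel A \<inter> nullspace_prop_set (K1 \<union> Km1) \<inter> sign_set K1 Km1"
    and "x - x0 \<noteq> 0"
proof -
  have x: "x = x0 + (x - x0)" by simp
  show "x - x0 \<noteq> 0" using \<open>x \<noteq> x0\<close> by simp
  have "x - x0 \<in> matrix_kernel A"
    using \<open>A *v x = A *v x0\<close> by (simp add: matrix_kernel_def matrix_vector_mult_diff_distrib)
  moreover have "x - x0 \<in> sign_set K1 Km1"
    using sign_vec_add_in_box_imp_sign_set[OF disj] box x by (metis x0_def)
  moreover have "x - x0 \<in> nullspace_prop_set (K1 \<union> Km1)"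
    using l1norm_sign_vec_add_ge[OF disj, of "x - x0"] l1norm_sign_vec[OF disj] le x
    by (simp add: x0_def nullspace_prop_set_def)
  ultimately show "x - x0 \<in> matrix_kernel A \<inter> nullspace_prop_set (K1 \<union> Km1) \<inter> sign_set K1 Km1"
    by blast
qed

theorem theorem3p2:
  fixes A :: "real ^ 'n ^ 'm" and K1 Km1 :: "'n set"
  assumes "K1 \<inter> Km1 = {}"
  shows "unique_box_l1_solution A (indicator_vec K1 - indicator_vec Km1) \<longleftrightarrow>
         matrix_kernel A \<inter> nullspace_prop_set (K1 \<union> Km1) \<inter> sign_set K1 Km1 = {0}"
    (is "_ \<longleftrightarrow> ?C = {0}")
proof -
  define x0 where "x0 = indicator_vec K1 - indicator_vec Km1"
  have "\<forall>i. -1 \<le> x0 $ i \<and> x0 $ i \<le> 1"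
    by (simp add: x0_def indicator_vec_def)
  then have "unique_box_l1_solution A x0 \<longleftrightarrow>
      (\<nexists>x. A *v x = A *v x0 \<and> (\<forall>i. -1 \<le> x $ i \<and> x $ i \<le> 1) \<and> x \<noteq> x0 \<and> l1norm x \<le> l1norm x0)"
    unfolding unique_box_l1_solution_def Let_def by (auto simp: not_less)
  also have "\<dots> \<longleftrightarrow> (\<nexists>w. w \<in> ?C \<and> w \<noteq> 0)"
    using competitor_of_cone_vector[OF assms] cone_vector_of_competitor[OF assms]
    unfolding x0_def by metis
  also have "\<dots> \<longleftrightarrow> ?C = {0}"
    using zero_in_cones by blast
  finally show ?thesis by (simp add: x0_def)
qed

end
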